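(* Let $p$ be an odd prime and let $d\in\mathbb{Z}$ with $\left(\frac{-d}{p}\right)=-1$. For an integer $m\ge 0$ put $S_m(d,p)=\det\left[(j^2+dk^2)^m\right]_{1\le j,k\le (p-1)/2}$. (i) We have $\left(\frac{S_{p-2}(d,p)}{p}\right)=\left(\frac 2p\right)$. Moreover, $$\det\left[\frac1{j^2+dk^2}\right]_{1\le j,k\le (p-1)/2}\equiv\begin{cases}d^{(p-1)/4}\pmod p&\text{if } p\equiv1\pmod4,\\(-1)^{(p+1)/4}\pmod p&\text{if } p\equiv3\pmod4.\end{cases}$$ (ii) We have $\left(\frac{S_{p-3}(d,p)}{p}\right)=\frac{1-\left(\frac{-1}{p}\right)}{2}$. Moreover, when $p\equiv3\pmod4$, $$\det\left[\frac1{(j^2+dk^2)^2}\right]_{1\le j,k\le (p-1)/2}\equiv\frac14\prod_{r=1}^{(p-3)/4}\left(r+\frac14\right)^2\pmod p.$$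
   Context: $\left(\frac{\cdot}{p}\right)$ is the Legendre symbol. Since $\left(\frac{-d}{p}\right)=-1$, no $j^2+dk^2$ with $1\le j,k\le(p-1)/2$ is divisible by $p$, so the determinants above are rational numbers whose denominators are prime to $p$; congruences modulo $p$ between such rationals are understood in the ring of rationals with denominator prime to $p$. *)

theory Defs
  imports "HOL-Number_Theory.Number_Theory" "Jordan_Normal_Form.Determinant"
begin

definition rat_cong :: "rat \<Rightarrow> rat \<Rightarrow> int \<Rightarrow> bool" where
  "rat_cong a b p \<longleftrightarrow> (\<exists>x y :: int. p dvd x \<and> \<not> p dvd y \<and> a - b = of_int x / of_int y)"

text \<open>S_m(d,p) = det[(j^2+dk^2)^m]_{1<=j,k<=(p-1)/2} (indices shifted to 0-based).\<close>
definition S :: "nat \<Rightarrow> int \<Rightarrow> nat \<Rightarrow> int" where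
  "S m d p = det (mat ((p - 1) div 2) ((p - 1) div 2)
      (\<lambda>(j, k). (int (j + 1) ^ 2 + d * int (k + 1) ^ 2) ^ m))"

definition Dinv :: "nat \<Rightarrow> int \<Rightarrow> nat \<Rightarrow> rat" where
  "Dinv e d p = det (mat ((p - 1) div 2) ((p - 1) div 2)
      (\<lambda>(j, k). 1 / (of_int (int (j + 1) ^ 2 + d * int (k + 1) ^ 2)) ^ e))"

end

theory Submission
  imports Defs
begin

(* Write n = (p - 1) / 2 and x_k = (k + 1)^2 for k < n, so that the x_k are the nonzero squares
   mod p and their e-th power sum is n or 0 mod p according as n divides e or not.
   For m + s = 2n, multiplying M = ((x_j + d x_k)^m) by (x_k^(b+s)) and expanding binomially,
   these power sums kill all but two terms of each entry, so the product is congruent to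
   V * diag (n c_b) with V = (x_k^b). Since det V is prime to p, this gives
   S_m(d,p) * prod_k x_k^s == prod_b n c_b (mod p).
   For m = p - 2 and m = p - 3 the binomial coefficients are (-1)^l (l+1) and
   (-1)^l (l+1)(l+2)/2 mod p, and d^n == -(-1)^n because -d is a non-residue; this evaluates
   the product. Wilson's theorem gives (n!)^2 == (-1)^(n+1), and Euler's criterion together with
   Gauss' lemma for (2/p) yields the Legendre symbols. The rational determinants reduce to
   S_(p-1-e) since 1/D^e == D^(p-1-e) in the ring of p-integral rationals. *)

definition p_integral :: "int \<Rightarrow> rat \<Rightarrow> bool" where
  "p_integral p q \<longleftrightarrow> (\<exists>x y :: int. \<not> p dvd y \<and> q = of_int x / of_int y)"

context
  fixes p :: int
  assumes prime_p: "prime p"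
begin

lemma of_int_p_nonzero: "(of_int p :: rat) \<noteq> 0"
  using prime_p by auto

lemma p_integral_of_int [simp]: "p_integral p (of_int a)"
  unfolding p_integral_def using not_prime_unit[of p] prime_p
  by (intro exI[of _ a] exI[of _ 1]) auto

lemma p_integral_add:
  assumes "p_integral p a" "p_integral p b"
  shows "p_integral p (a + b)"
proof -
  obtain x1 y1 x2 y2 where "\<not> p dvd y1" "a = of_int x1 / of_int y1"
    "\<not> p dvd y2" "b = of_int x2 / of_int y2"
    using assms unfolding p_integral_def by blast
  moreover from this have "a + b = of_int (x1 * y2 + x2 * y1) / of_int (y1 * y2)"
    by (cases "y1 = 0 \<or> y2 = 0") (auto simp: field_simps)
  ultimately show ?thesis
    unfolding p_integral_def using prime_p by (metis prime_dvd_mult_iff)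
qed

lemma p_integral_mult:
  assumes "p_integral p a" "p_integral p b"
  shows "p_integral p (a * b)"
proof -
  obtain x1 y1 x2 y2 where "\<not> p dvd y1" "a = of_int x1 / of_int y1"
    "\<not> p dvd y2" "b = of_int x2 / of_int y2"
    using assms unfolding p_integral_def by blast
  moreover from this have "a * b = of_int (x1 * x2) / of_int (y1 * y2)"
    by simp
  ultimately show ?thesis
    unfolding p_integral_def using prime_p by (metis prime_dvd_mult_iff)
qed

lemma p_integral_prod: "(\<And>i. i \<in> A \<Longrightarrow> p_integral p (f i)) \<Longrightarrow> p_integral p (\<Prod>i\<in>A. f i)"
proof (induction A rule: infinite_finite_induct)
  case (insert x F)
  then show ?case by (simp add: p_integral_mult)
qed (metis of_int_1 p_integral_of_int prod.infinite prod.empty)+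

lemma rat_cong_iff_p_integral: "rat_cong a b p \<longleftrightarrow> p_integral p ((a - b) / of_int p)"
proof
  assume "rat_cong a b p"
  then obtain x y where "\<not> p dvd y" "a - b = of_int (p * x) / of_int y"
    unfolding rat_cong_def by (metis dvdE)
  then show "p_integral p ((a - b) / of_int p)"
    unfolding p_integral_def using of_int_p_nonzero by (intro exI[of _ x] exI[of _ y]) auto
next
  assume "p_integral p ((a - b) / of_int p)"
  then obtain x y where "\<not> p dvd y" "(a - b) / of_int p = of_int x / of_int y"
    unfolding p_integral_def by blast
  moreover from this have "a - b = of_int (p * x) / of_int y"
    using of_int_p_nonzero by (simp add: divide_eq_eq)
  ultimately show "rat_cong a b p"
    unfolding rat_cong_def using dvd_triv_left[of p x] by blast
qed

lemma rat_cong_refl: "rat_cong a a p"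
  unfolding rat_cong_iff_p_integral by (metis diff_self div_0 of_int_0 p_integral_of_int)

lemma rat_cong_sym: "rat_cong a b p \<Longrightarrow> rat_cong b a p"
  unfolding rat_cong_iff_p_integral
  by (drule p_integral_mult[OF p_integral_of_int[of "-1"]]) (simp add: minus_divide_left)

lemma rat_cong_add: "rat_cong a b p \<Longrightarrow> rat_cong c d p \<Longrightarrow> rat_cong (a + c) (b + d) p"
  unfolding rat_cong_iff_p_integral
  by (drule (1) p_integral_add) (simp add: diff_divide_distrib add_divide_distrib algebra_simps)

lemma rat_cong_trans: "rat_cong a b p \<Longrightarrow> rat_cong b c p \<Longrightarrow> rat_cong a c p"
  unfolding rat_cong_iff_p_integral
  by (drule (1) p_integral_add) (simp add: diff_divide_distrib add_divide_distrib)

lemma rat_cong_mult: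
  assumes "rat_cong a b p" "rat_cong c d p" "p_integral p b" "p_integral p c"
  shows "rat_cong (a * c) (b * d) p"
proof -
  have "(a * c - b * d) / of_int p = (a - b) / of_int p * c + b * ((c - d) / of_int p)"
    using of_int_p_nonzero by (simp add: field_simps)
  moreover have "p_integral p ((a - b) / of_int p * c + b * ((c - d) / of_int p))"
    using assms unfolding rat_cong_iff_p_integral by (intro p_integral_add p_integral_mult)
  ultimately show ?thesis
    unfolding rat_cong_iff_p_integral by simp
qed

lemma rat_cong_p_integral:
  assumes "rat_cong a b p" "p_integral p b"
  shows "p_integral p a"
proof -
  have "a = (a - b) / of_int p * of_int p + b"
    using of_int_p_nonzero by simp
  then show ?thesis
    using assms unfolding rat_cong_iff_p_integral
    by (metis p_integral_add p_integral_mult p_integral_of_int)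
qed

lemma rat_cong_sum:
  "(\<And>i. i \<in> A \<Longrightarrow> rat_cong (f i) (g i) p) \<Longrightarrow> rat_cong (\<Sum>i\<in>A. f i) (\<Sum>i\<in>A. g i) p"
  by (induction A rule: infinite_finite_induct) (auto intro: rat_cong_refl rat_cong_add)

lemma rat_cong_prod:
  assumes "\<And>i. i \<in> A \<Longrightarrow> rat_cong (f i) (g i) p" "\<And>i. i \<in> A \<Longrightarrow> p_integral p (g i)"
  shows "rat_cong (\<Prod>i\<in>A. f i) (\<Prod>i\<in>A. g i) p"
  using assms
proof (induction A rule: infinite_finite_induct)
  case (insert x F)
  have "p_integral p (\<Prod>i\<in>F. f i)"
    using insert by (metis insert_iff p_integral_prod rat_cong_p_integral)
  with insert show ?case
    by (simp add: rat_cong_mult)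
qed (simp_all add: rat_cong_refl)

lemma rat_cong_of_int_iff: "rat_cong (of_int a) (of_int b) p \<longleftrightarrow> [a = b] (mod p)"
proof
  assume "rat_cong (of_int a) (of_int b) p"
  then obtain x y where xy: "p dvd x" "\<not> p dvd y" "of_int a - of_int b = (of_int x / of_int y :: rat)"
    unfolding rat_cong_def by blast
  then have "(a - b) * y = x"
    by (cases "y = 0") (auto simp: field_simps simp flip: of_int_diff of_int_mult)
  with xy have "p dvd (a - b) * y"
    by simp
  with xy prime_p show "[a = b] (mod p)"
    by (simp add: prime_dvd_mult_iff cong_iff_dvd_diff)
next
  assume "[a = b] (mod p)"
  then show "rat_cong (of_int a) (of_int b) p"
    unfolding rat_cong_def cong_iff_dvd_diff using not_prime_unit[of p] prime_p
    by (intro exI[of _ "a - b"] exI[of _ 1]) auto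
qed

lemma rat_cong_of_int_divide:
  assumes "\<not> p dvd c" "[c * a = b] (mod p)"
  shows "rat_cong (of_int a) (of_int b / of_int c) p"
proof -
  have "of_int a - of_int b / of_int c = (of_int (c * a - b) / of_int c :: rat)"
    using assms(1) by (cases "c = 0") (auto simp: field_simps)
  then show ?thesis
    unfolding rat_cong_def using assms by (metis cong_iff_dvd_diff)
qed

lemma det_rat_cong:
  fixes A B :: "rat mat"
  assumes A: "A \<in> carrier_mat n n" and B: "B \<in> carrier_mat n n"
    and cong: "\<And>i j. i < n \<Longrightarrow> j < n \<Longrightarrow> rat_cong (A $$ (i, j)) (B $$ (i, j)) p"
    and integral: "\<And>i j. i < n \<Longrightarrow> j < n \<Longrightarrow> p_integral p (B $$ (i, j))"
  shows "rat_cong (det A) (det B) p"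
  unfolding det_def'[OF A] det_def'[OF B]
proof (rule rat_cong_sum)
  fix q assume "q \<in> {q. q permutes {0..<n}}"
  then have q: "i < n \<Longrightarrow> q i < n" for i
    by (simp add: permutes_in_image)
  have "rat_cong (\<Prod>i = 0..<n. A $$ (i, q i)) (\<Prod>i = 0..<n. B $$ (i, q i)) p"
    using q by (intro rat_cong_prod cong integral) auto
  moreover have "p_integral p (\<Prod>i = 0..<n. B $$ (i, q i))"
    using q by (intro p_integral_prod integral) auto
  ultimately show "rat_cong (signof q * (\<Prod>i = 0..<n. A $$ (i, q i)))
      (signof q * (\<Prod>i = 0..<n. B $$ (i, q i))) p"
    by (intro rat_cong_mult rat_cong_refl)
      (auto simp: rat_cong_p_integral)
qed

end

lemma det_cong:
  fixes A B :: "int mat"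
  assumes A: "A \<in> carrier_mat n n" and B: "B \<in> carrier_mat n n"
    and cong: "\<And>i j. i < n \<Longrightarrow> j < n \<Longrightarrow> [A $$ (i, j) = B $$ (i, j)] (mod m)"
  shows "[det A = det B] (mod m)"
  unfolding det_def'[OF A] det_def'[OF B]
  by (intro cong_sum cong_mult cong_refl cong_prod cong)
    (auto simp: permutes_in_image)

lemma det_scale_rows:
  fixes A :: "'a :: comm_ring_1 mat"
  assumes A: "A \<in> carrier_mat n n"
  shows "det (mat n n (\<lambda>(i, j). w i * A $$ (i, j))) = (\<Prod>i<n. w i) * det A"
proof -
  have "det (mat n n (\<lambda>(i, j). w i * A $$ (i, j))) =
      (\<Sum>q | q permutes {0..<n}. signof q * (\<Prod>i = 0..<n. w i * A $$ (i, q i)))"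
    by (subst det_def'[of _ n]) (auto intro!: sum.cong prod.cong permutes_in_image)
  also have "\<dots> = (\<Prod>i<n. w i) * det A"
    by (simp add: det_def'[OF A] sum_distrib_left prod.distrib atLeast0LessThan ac_simps)
  finally show ?thesis .
qed

lemma det_scale_cols:
  fixes A :: "'a :: comm_ring_1 mat"
  assumes A: "A \<in> carrier_mat n n"
  shows "det (mat n n (\<lambda>(i, j). A $$ (i, j) * w j)) = (\<Prod>j<n. w j) * det A"
proof -
  have "mat n n (\<lambda>(i, j). A $$ (i, j) * w j) = transpose_mat (mat n n (\<lambda>(i, j). w i * A\<^sup>T $$ (i, j)))"
    using A by (auto simp: mult.commute)
  then have "det (mat n n (\<lambda>(i, j). A $$ (i, j) * w j)) = det (mat n n (\<lambda>(i, j). w i * A\<^sup>T $$ (i, j)))"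
    by (simp only: det_transpose[OF mat_carrier])
  also have "\<dots> = (\<Prod>j<n. w j) * det A\<^sup>T"
    using A by (intro det_scale_rows) simp
  finally show ?thesis
    by (simp add: det_transpose[OF A])
qed

lemma (in comm_monoid_set) reflect_halves:
  fixes n :: nat
  shows "F g {1..2 * n} = F (\<lambda>k. g (k + 1) \<^bold>* g (2 * n - k)) {..<n}"
proof -
  have split: "{1..2 * n} = (\<lambda>k. k + 1) ` {..<n} \<union> (\<lambda>k. 2 * n - k) ` {..<n}"
  proof (intro equalityI subsetI)
    fix x assume x: "x \<in> {1..2 * n}"
    show "x \<in> (\<lambda>k. k + 1) ` {..<n} \<union> (\<lambda>k. 2 * n - k) ` {..<n}"
    proof (cases "x \<le> n")
      case True
      with x show ?thesis by (auto intro!: image_eqI[of _ _ "x - 1"])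
    next
      case False
      with x show ?thesis by (auto intro!: image_eqI[of _ _ "2 * n - x"])
    qed
  qed auto
  have "F g {1..2 * n} = F g ((\<lambda>k. k + 1) ` {..<n}) \<^bold>* F g ((\<lambda>k. 2 * n - k) ` {..<n})"
    unfolding split by (rule union_disjoint) auto
  also have "\<dots> = F (\<lambda>k. g (k + 1)) {..<n} \<^bold>* F (\<lambda>k. g (2 * n - k)) {..<n}"
    by (subst (1 2) reindex) (auto simp: inj_on_def)
  finally show ?thesis
    by (simp add: distrib)
qed

context
  fixes p :: nat
  assumes prime_p: "prime p"
begin

lemma fermat_theorem_int:
  assumes "\<not> int p dvd a"
  shows "[a ^ (p - 1) = 1] (mod int p)"
proof -
  define b where "b = a mod int p"
  have b: "int (nat b) = b" "[a = b] (mod int p)"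
    unfolding b_def using prime_gt_0_nat[OF prime_p] by (simp_all add: cong_def)
  have "\<not> int p dvd b"
    using assms b(2) cong_dvd_iff by blast
  then have "\<not> p dvd nat b"
    using b(1) by (metis int_dvd_int_iff)
  then have "[nat b ^ (p - 1) = 1] (mod p)"
    by (rule fermat_theorem[OF prime_p])
  then have "[b ^ (p - 1) = 1] (mod int p)"
    using b(1) by (metis cong_int_iff of_nat_1 of_nat_power)
  with b(2) show ?thesis
    using cong_pow cong_trans by blast
qed

lemma sum_powers_units_cong:
  assumes "\<not> (p - 1) dvd j"
  shows "[(\<Sum>x = 1..p - 1. int x ^ j) = 0] (mod int p)"
proof -
  obtain g where "residue_primroot p g"
    using prime_primitive_root_exists[OF prime_gt_1_nat[OF prime_p] prime_p] by blast
  then have coprime: "coprime (int g) (int p)" and ord: "ord p g = p - 1"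
    using totient_prime[OF prime_p] by (auto simp: residue_primroot_def coprime_commute)
  define T where "T = (\<Sum>x\<in>{1..<int p}. x ^ j)"
  have T_eq: "(\<Sum>x = 1..p - 1. int x ^ j) = T"
    unfolding T_def using prime_gt_0_nat[OF prime_p]
    by (intro sum.reindex_bij_witness[of _ nat int]) auto
  have "T = (\<Sum>x\<in>{1..<int p}. (int g * x mod int p) ^ j)"
    unfolding T_def
    by (rule sym, rule sum.reindex_bij_betw[OF bij_betw_int_remainders_mult[OF coprime]])
  also have "[\<dots> = (\<Sum>x\<in>{1..<int p}. int g ^ j * x ^ j)] (mod int p)"
    by (intro cong_sum) (simp add: cong_def power_mod power_mult_distrib)
  also have "(\<Sum>x\<in>{1..<int p}. int g ^ j * x ^ j) = int g ^ j * T"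
    by (simp add: T_def sum_distrib_left)
  finally have "int p dvd T - int g ^ j * T"
    by (simp add: cong_iff_dvd_diff)
  then have "int p dvd - (T - int g ^ j * T)"
    by (simp only: dvd_minus_iff)
  then have "int p dvd (int g ^ j - 1) * T"
    by (simp add: algebra_simps)
  moreover have "\<not> int p dvd int g ^ j - 1"
  proof
    assume "int p dvd int g ^ j - 1"
    then have "[g ^ j = 1] (mod p)"
      by (metis cong_iff_dvd_diff cong_int_iff of_nat_1 of_nat_power)
    then show False
      using assms ord ord_divides' by simp
  qed
  ultimately show ?thesis
    using prime_p T_eq by (simp add: prime_dvd_mult_iff cong_0_iff)
qed

lemma binomial_prime_minus_1_cong:
  "l \<le> p - 1 \<Longrightarrow> [int ((p - 1) choose l) = (-1) ^ l] (mod int p)"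
proof (induction l)
  case (Suc l)
  have "p dvd p choose Suc l"
    using Suc.prems prime_p by (intro dvd_choose_prime) auto
  then have p: "[int (Suc (p - 1) choose Suc l) = 0] (mod int p)"
    using prime_gt_0_nat[OF prime_p] by (simp add: cong_0_iff)
  have "int ((p - 1) choose Suc l) = int (Suc (p - 1) choose Suc l) - int ((p - 1) choose l)"
    by simp
  also have "[\<dots> = 0 - (-1) ^ l] (mod int p)"
    using Suc by (intro cong_diff p) simp
  finally show ?case
    by simp
qed simp

lemma binomial_prime_minus_2_cong:
  "l \<le> p - 2 \<Longrightarrow> [int ((p - 2) choose l) = (-1) ^ l * int (l + 1)] (mod int p)"
proof (induction l)
  case (Suc l)
  then have p: "Suc (p - 2) = p - 1"
    by linarith
  have "int ((p - 2) choose Suc l) = int (Suc (p - 2) choose Suc l) - int ((p - 2) choose l)"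
    by simp
  also have "[\<dots> = (-1) ^ Suc l - (-1) ^ l * int (l + 1)] (mod int p)"
    unfolding p using Suc by (intro cong_diff binomial_prime_minus_1_cong) simp_all
  finally show ?case
    by (simp add: algebra_simps)
qed simp

lemma binomial_prime_minus_3_cong:
  "l \<le> p - 3 \<Longrightarrow> [2 * int ((p - 3) choose l) = (-1) ^ l * int ((l + 1) * (l + 2))] (mod int p)"
proof (induction l)
  case (Suc l)
  then have p: "Suc (p - 3) = p - 2"
    by linarith
  have "2 * int ((p - 3) choose Suc l) = 2 * int (Suc (p - 3) choose Suc l) - 2 * int ((p - 3) choose l)"
    by simp
  also have "[\<dots> = 2 * ((-1) ^ Suc l * int (Suc l + 1)) - (-1) ^ l * int ((l + 1) * (l + 2))] (mod int p)"
    unfolding p using Suc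
    by (intro cong_diff cong_mult[OF cong_refl] binomial_prime_minus_2_cong Suc.IH) simp_all
  finally show ?case
    by (simp add: algebra_simps)
qed simp

end

lemma minus_one_power_half_diff:
  fixes n :: nat
  shows "(-1 :: int) ^ (n - n div 2) = (-1) ^ (((2 * n + 1)\<^sup>2 - 1) div 8)"
proof -
  obtain q where "n = 2 * q \<or> n = 2 * q + 1"
    by (metis oddE evenE)
  then show ?thesis
  proof
    assume n: "n = 2 * q"
    then have "(2 * n + 1)\<^sup>2 - 1 = 8 * (2 * q\<^sup>2 + q)"
      by (simp add: power2_eq_square algebra_simps)
    with n show ?thesis
      by (simp add: power_add power_mult)
  next
    assume n: "n = 2 * q + 1"
    then have "(2 * n + 1)\<^sup>2 - 1 = 8 * (2 * q\<^sup>2 + q + (2 * q + 1))"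
      by (simp add: power2_eq_square algebra_simps)
    with n show ?thesis
      by (simp add: power_add power_mult)
  qed
qed

lemma Legendre_two:
  fixes p :: nat
  assumes prime_p: "prime p" and odd_p: "odd p"
  shows "Legendre 2 (int p) = (-1) ^ ((p\<^sup>2 - 1) div 8)"
proof -
  define n where "n = (p - 1) div 2"
  have p_eq: "p = 2 * n + 1"
    unfolding n_def using odd_p by simp
  have p_gt_2: "p > 2"
    using prime_ge_2_nat[OF prime_p] odd_p by (cases "p = 2") auto
  interpret GAUSS p 2
  proof
    show "[2 \<noteq> 0] (mod int p)"
      using p_gt_2 by (auto simp: cong_0_iff dest: zdvd_imp_le)
  qed (use prime_p p_gt_2 in auto)
  have half: "(int p - 1) div 2 = int n"
    using p_eq by simp
  have "C = (\<lambda>x. x * 2) ` A"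
    unfolding C_def B_def image_image
  proof (rule image_cong[OF refl])
    fix x assume "x \<in> A"
    then show "x * 2 mod int p = x * 2"
      unfolding A_def half using p_eq by (intro mod_pos_pos_trivial) auto
  qed
  then have "E = (\<lambda>x. x * 2) ` {x \<in> A. int n < x * 2}"
    unfolding E_def half by auto
  also have "{x \<in> A. int n < x * 2} = {int (n div 2) + 1 .. int n}"
    unfolding A_def half by auto
  finally have "card E = n - n div 2"
    by (simp add: card_image inj_on_def)
  then show ?thesis
    using gauss_lemma minus_one_power_half_diff[of n] p_eq by simp
qed

definition square_vandermonde :: "nat \<Rightarrow> int mat" where
  "square_vandermonde n = mat n n (\<lambda>(k, b). (int (k + 1) ^ 2) ^ b)"

lemma square_vandermonde_carrier [simp]: "square_vandermonde n \<in> carrier_mat n n"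
  by (simp add: square_vandermonde_def)

definition power_form_mat :: "nat \<Rightarrow> int \<Rightarrow> nat \<Rightarrow> int mat" where
  "power_form_mat n d m = mat n n (\<lambda>(j, k). (int (j + 1) ^ 2 + d * int (k + 1) ^ 2) ^ m)"

(* Multiplying power_form_mat by the matrix (x_k^(b+s)), x_k = (k+1)^2, and expanding
   binomially, only the terms l = b and l = b + n survive mod p in column b; these are
   their coefficients. *)
definition column_factor :: "nat \<Rightarrow> int \<Rightarrow> nat \<Rightarrow> nat \<Rightarrow> int" where
  "column_factor n d m b = int (m choose b) * d ^ (m - b)
     + (if b + n \<le> m then int (m choose (b + n)) * d ^ (m - b - n) else 0)"

lemma dvd_add_diff_iff_eq:
  fixes a b n :: nat
  assumes "a < n" "b < n"
  shows "n dvd a + n - b \<longleftrightarrow> a = b"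
proof (cases "b \<le> a")
  case True
  then have eq: "a + n - b = n + (a - b)" and "a - b < n"
    using assms by simp_all
  then show ?thesis
    unfolding eq dvd_add_triv_left_iff using nat_dvd_not_less[of "a - b" n] True by auto
next
  case False
  then show ?thesis
    using nat_dvd_not_less[of "a + n - b" n] assms by auto
qed

lemma dvd_double_diff_add_iff:
  fixes b l n :: nat
  assumes "l < 2 * n" "b < n"
  shows "n dvd 2 * n - l + b \<longleftrightarrow> l = b \<or> l = b + n"
proof
  assume "n dvd 2 * n - l + b"
  then obtain c where c: "2 * n - l + b = n * c"
    by blast
  have "n * c < n * 3"
    using c assms by linarith
  moreover have "c \<noteq> 0"
  proof
    assume "c = 0"
    with c have "2 * n - l + b = 0"
      by simp
    with assms show False
      by linarith
  qed
  ultimately have "c = 1 \<or> c = 2"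
    by auto
  with c assms show "l = b \<or> l = b + n"
    by auto
next
  assume "l = b \<or> l = b + n"
  with assms have "2 * n - l + b = n * 2 \<or> 2 * n - l + b = n * 1"
    by auto
  then show "n dvd 2 * n - l + b"
    by (metis dvd_triv_left)
qed

lemma sum_atMost_two_points:
  fixes g :: "nat \<Rightarrow> 'a :: comm_monoid_add"
  assumes "b \<le> m" "0 < n"
  shows "(\<Sum>l\<le>m. if l = b \<or> l = b + n then g l else 0) = g b + (if b + n \<le> m then g (b + n) else 0)"
proof -
  have "(\<Sum>l\<le>m. if l = b \<or> l = b + n then g l else 0) = sum g ({..m} \<inter> {b, b + n})"
    by (simp add: sum.inter_restrict)
  also have "{..m} \<inter> {b, b + n} = (if b + n \<le> m then {b, b + n} else {b})"
    using assms by auto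
  finally show ?thesis
    using assms by simp
qed

lemma sum_binomial_expand:
  fixes y d :: "'a :: comm_semiring_1" and x :: "nat \<Rightarrow> 'a"
  assumes "m + s = N"
  shows "(\<Sum>k\<in>K. (y + d * x k) ^ m * x k ^ (b + s))
    = (\<Sum>l\<le>m. of_nat (m choose l) * y ^ l * d ^ (m - l) * (\<Sum>k\<in>K. x k ^ (N - l + b)))"
proof -
  have "(y + d * x k) ^ m * x k ^ (b + s)
      = (\<Sum>l\<le>m. of_nat (m choose l) * y ^ l * d ^ (m - l) * x k ^ (N - l + b))" for k
  proof -
    have "(y + d * x k) ^ m * x k ^ (b + s) = (\<Sum>l\<le>m. of_nat (m choose l) * y ^ l * (d * x k) ^ (m - l) * x k ^ (b + s))"
      by (simp add: binomial_ring sum_distrib_right)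
    also have "\<dots> = (\<Sum>l\<le>m. of_nat (m choose l) * y ^ l * d ^ (m - l) * x k ^ (N - l + b))"
    proof (intro sum.cong refl)
      fix l assume "l \<in> {..m}"
      then have "N - l + b = (m - l) + (b + s)"
        using assms by simp
      then show "of_nat (m choose l) * y ^ l * (d * x k) ^ (m - l) * x k ^ (b + s)
          = of_nat (m choose l) * y ^ l * d ^ (m - l) * x k ^ (N - l + b)"
        by (simp only: power_mult_distrib power_add mult_ac)
    qed
    finally show ?thesis .
  qed
  then show ?thesis
    by (simp add: sum.swap[of _ K] sum_distrib_left)
qed

lemma prod_alternating_reversed_powers:
  fixes c d :: "'a :: comm_ring_1"
  shows "(\<Prod>b<N. c * ((-1) ^ b * (f b * d ^ (N - 1 - b))))
    = c ^ N * (-1) ^ (\<Sum>b<N. b) * (\<Prod>b<N. f b) * d ^ (\<Sum>b<N. b)"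
proof -
  have reverse: "(\<Sum>b<N. N - 1 - b) = (\<Sum>b<N. b)"
    by (rule sum.reindex_bij_witness[of _ "\<lambda>b. N - 1 - b" "\<lambda>b. N - 1 - b"]) auto
  show ?thesis
    by (simp only: prod.distrib prod_constant card_lessThan power_sum[symmetric] reverse mult.assoc)
qed

lemma double_sum_lessThan_add: "2 * (\<Sum>b<n. b) + n = n * (n :: nat)"
  by (induction n) (simp_all add: algebra_simps)

lemma sum_lessThan_double_add: "(\<Sum>b<2 * t. b) + t = 2 * (t * (t :: nat))"
proof -
  have "2 * (\<Sum>b<2 * t. b) + 2 * t = 2 * (2 * (t * t))"
    using double_sum_lessThan_add[of "2 * t"] by (simp add: algebra_simps)
  then show ?thesis
    by linarith
qed

locale odd_prime =
  fixes p n :: nat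
  assumes prime_p: "prime p" and p_eq: "p = 2 * n + 1"
begin

lemma half_pos: "0 < n"
  using prime_gt_1_nat[OF prime_p] p_eq by simp

lemma prime_int_p: "prime (int p)"
  using prime_p by simp

lemma p_gt_2: "2 < p"
  using half_pos p_eq by simp

lemma half_eq: "(p - 1) div 2 = n"
  using p_eq by simp

lemma S_eq_det: "S m d p = det (power_form_mat n d m)"
  unfolding S_def power_form_mat_def half_eq ..

lemma Euler_criterion_half: "[Legendre a (int p) = a ^ n] (mod int p)"
  using euler_criterion[OF prime_p p_gt_2, of a] half_eq by simp

lemma Legendre_values_cong_imp_eq:
  assumes "x \<in> {-1, 0, 1}" "y \<in> {-1, 0, 1}" "[x = y] (mod int p)"
  shows "x = y"
proof (rule ccontr)
  assume "x \<noteq> y"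
  moreover have "int p dvd x - y"
    using assms(3) by (simp add: cong_iff_dvd_diff)
  ultimately have "int p \<le> \<bar>x - y\<bar>"
    using dvd_imp_le_int[of "x - y" "int p"] by simp
  moreover have "\<bar>x - y\<bar> \<le> 2"
    using assms(1,2) by auto
  ultimately show False
    using p_gt_2 by simp
qed

lemma not_dvd_succ:
  assumes "k < 2 * n"
  shows "\<not> int p dvd int (k + 1)"
  using assms p_eq by (intro zdvd_not_zless) auto

lemma reflect_cong:
  assumes "k < n"
  shows "[int (2 * n - k) = - int (k + 1)] (mod int p)"
proof -
  have "int (2 * n - k) - - int (k + 1) = int p"
    using assms p_eq by simp
  then show ?thesis
    unfolding cong_iff_dvd_diff by simp
qed

lemma sum_units_even_powers_cong:
  "[(\<Sum>x = 1..p - 1. int x ^ (2 * e)) = 2 * (\<Sum>k<n. (int (k + 1) ^ 2) ^ e)] (mod int p)"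
proof -
  have "(\<Sum>x = 1..p - 1. int x ^ (2 * e)) = (\<Sum>k<n. int (k + 1) ^ (2 * e) + int (2 * n - k) ^ (2 * e))"
    unfolding p_eq diff_add_inverse2 by (rule sum.reflect_halves)
  also have "[\<dots> = (\<Sum>k<n. 2 * (int (k + 1) ^ 2) ^ e)] (mod int p)"
  proof (intro cong_sum)
    fix k assume "k \<in> {..<n}"
    then have "[int (2 * n - k) ^ (2 * e) = (- int (k + 1)) ^ (2 * e)] (mod int p)"
      by (intro cong_pow reflect_cong) simp
    then have "[int (k + 1) ^ (2 * e) + int (2 * n - k) ^ (2 * e)
        = int (k + 1) ^ (2 * e) + (- int (k + 1)) ^ (2 * e)] (mod int p)"
      by (rule cong_add[OF cong_refl])
    moreover have "int (k + 1) ^ (2 * e) = (int (k + 1) ^ 2) ^ e"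
      and "(- int (k + 1)) ^ (2 * e) = (int (k + 1) ^ 2) ^ e"
      by (simp_all only: power_mult power2_minus)
    ultimately show "[int (k + 1) ^ (2 * e) + int (2 * n - k) ^ (2 * e) = 2 * (int (k + 1) ^ 2) ^ e] (mod int p)"
      by (simp only: mult_2)
  qed
  finally show ?thesis
    by (simp add: sum_distrib_left)
qed

lemma sum_square_powers_cong:
  "[(\<Sum>k<n. (int (k + 1) ^ 2) ^ e) = (if n dvd e then int n else 0)] (mod int p)"
proof (cases "n dvd e")
  case True
  then obtain c where e: "e = n * c"
    by blast
  have "[(int (k + 1) ^ 2) ^ e = 1] (mod int p)" if "k < n" for k
  proof -
    have "(int (k + 1) ^ 2) ^ e = (int (k + 1) ^ (p - 1)) ^ c"
      by (simp add: e p_eq power_mult)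
    also have "[\<dots> = 1 ^ c] (mod int p)"
      using that by (intro cong_pow fermat_theorem_int[OF prime_p] not_dvd_succ) simp
    finally show ?thesis
      by simp
  qed
  then have "[(\<Sum>k<n. (int (k + 1) ^ 2) ^ e) = (\<Sum>k<n. 1)] (mod int p)"
    by (intro cong_sum) simp
  with True show ?thesis
    by simp
next
  case False
  have "int p dvd 2 * (\<Sum>k<n. (int (k + 1) ^ 2) ^ e)"
    using sum_powers_units_cong[OF prime_p, of "2 * e"] sum_units_even_powers_cong[of e] False p_eq
    by (simp add: cong_0_iff cong_dvd_iff)
  moreover have "\<not> int p dvd 2"
    using p_eq half_pos by (intro zdvd_not_zless) auto
  ultimately show ?thesis
    using False prime_p by (simp add: prime_dvd_mult_iff cong_0_iff)
qed

lemma prod_half_squared_cong: "[(\<Prod>k<n. int (k + 1)) ^ 2 = (-1) ^ (n + 1)] (mod int p)"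
proof -
  have "[- 1 = (\<Prod>x = 1..p - 1. int x)] (mod int p)"
    using wilson_theorem[OF prime_p] by (simp add: fact_prod cong_sym_eq)
  also have "(\<Prod>x = 1..p - 1. int x) = (\<Prod>k<n. int (k + 1) * int (2 * n - k))"
    unfolding p_eq diff_add_inverse2 by (rule prod.reflect_halves)
  also have "[\<dots> = (\<Prod>k<n. - 1 * int (k + 1) ^ 2)] (mod int p)"
  proof (intro cong_prod)
    fix k assume "k \<in> {..<n}"
    then have "[int (2 * n - k) = - int (k + 1)] (mod int p)"
      by (intro reflect_cong) simp
    then have "[int (k + 1) * int (2 * n - k) = int (k + 1) * - int (k + 1)] (mod int p)"
      by (rule cong_mult[OF cong_refl])
    moreover have "int (k + 1) * - int (k + 1) = - 1 * int (k + 1) ^ 2"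
      by (simp add: power2_eq_square algebra_simps)
    ultimately show "[int (k + 1) * int (2 * n - k) = - 1 * int (k + 1) ^ 2] (mod int p)"
      by (simp only:)
  qed
  also have "(\<Prod>k<n. - 1 * int (k + 1) ^ 2) = (-1) ^ n * (\<Prod>k<n. int (k + 1)) ^ 2"
    by (simp only: prod.distrib prod_constant card_lessThan prod_power_distrib)
  finally have "[(-1) ^ n * (-1) = (-1) ^ n * ((-1) ^ n * (\<Prod>k<n. int (k + 1)) ^ 2)] (mod int p)"
    by (rule cong_mult[OF cong_refl])
  moreover have "(-1) ^ n * ((-1) ^ n * x) = x" and "(-1) ^ n * (-1) = (-1 :: int) ^ (n + 1)" for x :: int
    by (simp_all add: minus_one_power_iff)
  ultimately show ?thesis
    using cong_sym by simp
qed

lemma square_vandermonde_not_dvd: "\<not> int p dvd det (square_vandermonde n)"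
proof
  assume dvd: "int p dvd det (square_vandermonde n)"
  define V where "V = square_vandermonde n"
  define W where "W = mat n n (\<lambda>(k, b). (int (k + 1) ^ 2) ^ (n - b))"
  have V: "V \<in> carrier_mat n n" and W: "W \<in> carrier_mat n n"
    by (simp_all add: V_def W_def)
  have "[det (V\<^sup>T * W) = det (int n \<cdot>\<^sub>m 1\<^sub>m n)] (mod int p)"
  proof (rule det_cong)
    fix a b assume ab: "a < n" "b < n"
    have "(V\<^sup>T * W) $$ (a, b) = (\<Sum>k<n. (int (k + 1) ^ 2) ^ (a + n - b))"
      using ab by (simp add: V_def W_def square_vandermonde_def scalar_prod_def
          atLeast0LessThan flip: power_add)
    also have "[\<dots> = (int n \<cdot>\<^sub>m 1\<^sub>m n) $$ (a, b)] (mod int p)"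
      using sum_square_powers_cong[of "a + n - b"] ab
      by (cases "a = b") (simp_all add: dvd_add_diff_iff_eq)
    finally show "[(V\<^sup>T * W) $$ (a, b) = (int n \<cdot>\<^sub>m 1\<^sub>m n) $$ (a, b)] (mod int p)" .
  qed (use V W in auto)
  moreover have "det (V\<^sup>T * W) = det V * det W"
    using V W by (simp add: det_mult[of _ n] det_transpose)
  ultimately have "int p dvd int n ^ n"
    using dvd by (simp add: V_def cong_dvd_iff[symmetric])
  then have "int p dvd int n"
    using prime_dvd_power[OF prime_int_p] by blast
  then show False
    using p_eq half_pos by (auto dest: zdvd_imp_le)
qed

lemma half_power_cong: "[int n ^ (2 * n) = 1] (mod int p)"
proof -
  have "\<not> int p dvd int n"
    using half_pos p_eq by (intro zdvd_not_zless) auto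
  then show ?thesis
    using fermat_theorem_int[OF prime_p] p_eq by simp
qed

lemma square_power_half_cong:
  assumes "j < n"
  shows "[(int (j + 1) ^ 2) ^ n = 1] (mod int p)"
proof -
  have "(int (j + 1) ^ 2) ^ n = int (j + 1) ^ (p - 1)"
    by (simp add: p_eq power_mult)
  also have "[\<dots> = 1] (mod int p)"
    using assms by (intro fermat_theorem_int[OF prime_p] not_dvd_succ) simp
  finally show ?thesis .
qed

lemma power_form_product_entry_cong:
  fixes d :: int
  assumes m: "m + s = 2 * n" "1 \<le> s" "s \<le> n + 1" and jb: "j < n" "b < n"
  defines "x \<equiv> \<lambda>k. int (k + 1) ^ 2"
  shows "[(\<Sum>k<n. (x j + d * x k) ^ m * x k ^ (b + s)) = x j ^ b * (int n * column_factor n d m b)] (mod int p)"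
proof -
  define a where "a = (\<lambda>l. int (m choose l) * x j ^ l * d ^ (m - l))"
  have "(\<Sum>k<n. (x j + d * x k) ^ m * x k ^ (b + s)) = (\<Sum>l\<le>m. a l * (\<Sum>k<n. x k ^ (2 * n - l + b)))"
    unfolding a_def using m(1) by (rule sum_binomial_expand)
  also have "[\<dots> = (\<Sum>l\<le>m. if l = b \<or> l = b + n then a l * int n else 0)] (mod int p)"
  proof (intro cong_sum)
    fix l assume "l \<in> {..m}"
    then have "l < 2 * n"
      using m by simp
    have "[(\<Sum>k<n. x k ^ (2 * n - l + b)) = (if n dvd 2 * n - l + b then int n else 0)] (mod int p)"
      unfolding x_def by (rule sum_square_powers_cong)
    then have "[a l * (\<Sum>k<n. x k ^ (2 * n - l + b)) = a l * (if l = b \<or> l = b + n then int n else 0)] (mod int p)"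
      unfolding dvd_double_diff_add_iff[OF \<open>l < 2 * n\<close> jb(2)] by (rule cong_mult[OF cong_refl])
    then show "[a l * (\<Sum>k<n. x k ^ (2 * n - l + b)) = (if l = b \<or> l = b + n then a l * int n else 0)] (mod int p)"
      by (cases "l = b \<or> l = b + n") simp_all
  qed
  also have "(\<Sum>l\<le>m. if l = b \<or> l = b + n then a l * int n else 0)
      = a b * int n + (if b + n \<le> m then a (b + n) * int n else 0)"
    using m jb half_pos by (intro sum_atMost_two_points) simp_all
  also have "[\<dots> = x j ^ b * (int n * column_factor n d m b)] (mod int p)"
  proof (cases "b + n \<le> m")
    case True
    have "[x j ^ (b + n) = x j ^ b * 1] (mod int p)"
      unfolding power_add x_def using jb by (intro cong_mult cong_refl square_power_half_cong)
    then have "[a (b + n) = int (m choose (b + n)) * x j ^ b * d ^ (m - b - n)] (mod int p)"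
      unfolding a_def by (simp add: cong_mult)
    then have "[a b * int n + a (b + n) * int n
        = a b * int n + int (m choose (b + n)) * x j ^ b * d ^ (m - b - n) * int n] (mod int p)"
      by (intro cong_add cong_mult cong_refl)
    moreover have "a b * int n + int (m choose (b + n)) * x j ^ b * d ^ (m - b - n) * int n
        = x j ^ b * (int n * column_factor n d m b)"
      using True by (simp add: column_factor_def a_def algebra_simps)
    ultimately show ?thesis
      using True by simp
  next
    case False
    then show ?thesis
      by (simp add: column_factor_def a_def algebra_simps)
  qed
  finally show ?thesis .
qed

lemma power_form_det_cong:
  fixes d :: int
  assumes m: "m + s = 2 * n" "1 \<le> s" "s \<le> n + 1"
  shows "[det (power_form_mat n d m) * (\<Prod>k<n. (int (k + 1) ^ 2) ^ s)
      = (\<Prod>b<n. int n * column_factor n d m b)] (mod int p)"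
proof -
  define V where "V = square_vandermonde n"
  define M where "M = power_form_mat n d m"
  define Z where "Z = mat n n (\<lambda>(k, b). (int (k + 1) ^ 2) ^ s * V $$ (k, b))"
  define N where "N = mat n n (\<lambda>(j, b). V $$ (j, b) * (int n * column_factor n d m b))"
  have V: "V \<in> carrier_mat n n" and M: "M \<in> carrier_mat n n" and Z: "Z \<in> carrier_mat n n"
    by (simp_all add: V_def M_def power_form_mat_def Z_def)
  have "[det (M * Z) = det N] (mod int p)"
  proof (rule det_cong)
    fix j b assume jb: "j < n" "b < n"
    have "(M * Z) $$ (j, b) = (\<Sum>k<n. (int (j + 1) ^ 2 + d * int (k + 1) ^ 2) ^ m * (int (k + 1) ^ 2) ^ (b + s))"
      using jb by (simp add: M_def Z_def V_def power_form_mat_def square_vandermonde_def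
          scalar_prod_def atLeast0LessThan power_add mult_ac)
    also have "[\<dots> = N $$ (j, b)] (mod int p)"
      using power_form_product_entry_cong[OF m jb, of d] jb
      by (simp add: N_def V_def square_vandermonde_def)
    finally show "[(M * Z) $$ (j, b) = N $$ (j, b)] (mod int p)" .
  qed (use M Z in \<open>auto simp: N_def\<close>)
  moreover have "det (M * Z) = det M * ((\<Prod>k<n. (int (k + 1) ^ 2) ^ s) * det V)"
    using M Z V by (simp add: det_mult[of _ n] Z_def det_scale_rows)
  moreover have "det N = (\<Prod>b<n. int n * column_factor n d m b) * det V"
    using V by (simp add: N_def det_scale_cols)
  ultimately have "[det M * (\<Prod>k<n. (int (k + 1) ^ 2) ^ s) * det V
      = (\<Prod>b<n. int n * column_factor n d m b) * det V] (mod int p)"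
    by (simp add: mult.assoc)
  moreover have "coprime (det V) (int p)"
    using square_vandermonde_not_dvd prime_p unfolding V_def
    by (simp add: prime_imp_coprime coprime_commute)
  ultimately show ?thesis
    unfolding M_def by (simp add: cong_mult_rcancel)
qed

end

lemma inverse_power_rat_cong:
  fixes p :: nat
  assumes "prime p" "\<not> int p dvd D" "e \<le> p - 1"
  shows "rat_cong (1 / of_int D ^ e) (of_int (D ^ (p - 1 - e))) (int p)"
proof -
  have "e + (p - 1 - e) = p - 1"
    using assms(3) by simp
  then have "D ^ e * D ^ (p - 1 - e) = D ^ (p - 1)"
    by (simp only: power_add[symmetric])
  also have "[\<dots> = 1] (mod int p)"
    using assms by (intro fermat_theorem_int)
  finally have "rat_cong (of_int (D ^ (p - 1 - e))) (of_int 1 / of_int (D ^ e)) (int p)"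
    using assms prime_dvd_power[of "int p" D e]
    by (intro rat_cong_of_int_divide) (auto simp: prime_dvd_power_iff)
  then show ?thesis
    using assms(1) by (simp add: rat_cong_sym)
qed

lemma prod_shifted_quarter_squares:
  "1/4 * (\<Prod>r = 1..t. (of_nat r + 1/4 :: rat) ^ 2)
    = of_int ((\<Prod>k<t. int (4 * k + 5)) ^ 2) / of_int (4 ^ (2 * t + 1))"
proof -
  define Y where "Y = (\<Prod>k<t. int (4 * k + 5))"
  have "(\<Prod>r = 1..t. (of_nat r + 1/4 :: rat)) = (\<Prod>k<t. of_int (int (4 * k + 5)) / 4)"
    by (rule prod.reindex_bij_witness[of _ "\<lambda>k. k + 1" "\<lambda>r. r - 1"]) (auto simp: field_simps)
  also have "\<dots> = of_int Y / 4 ^ t"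
    by (simp add: Y_def prod_dividef)
  finally have "(\<Prod>r = 1..t. (of_nat r + 1/4 :: rat) ^ 2) = (of_int Y / 4 ^ t) ^ 2"
    by (simp only: prod_power_distrib[symmetric])
  also have "\<dots> = of_int Y ^ 2 / 16 ^ t"
    by (simp add: power_divide flip: power_mult_distrib power_mult add: power2_eq_square)
  finally have squares: "(\<Prod>r = 1..t. (of_nat r + 1/4 :: rat) ^ 2) = of_int Y ^ 2 / 16 ^ t" .
  have four: "(of_int (4 ^ (2 * t + 1)) :: rat) = 4 * 16 ^ t"
    by (simp add: power_mult)
  show ?thesis
    unfolding squares four Y_def[symmetric] by simp
qed

context odd_prime
begin

lemma Legendre_minus_one: "Legendre (-1) (int p) = (-1) ^ n"
  using Euler_criterion_half[of "-1"]
  by (intro Legendre_values_cong_imp_eq) (auto simp: Legendre_def minus_one_power_iff)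

lemma prod_linear_reflect_cong:
  assumes n: "n = 2 * t + 1"
  shows "[(\<Prod>b<2 * t. int (4 * b + 5)) = (-1) ^ t * (\<Prod>k<t. int (4 * k + 5)) ^ 2] (mod int p)"
proof -
  have "(\<Prod>b<2 * t. int (4 * b + 5)) = (\<Prod>r = 1..2 * t. int (4 * r + 1))"
    by (rule prod.reindex_bij_witness[of _ "\<lambda>r. r - 1" "\<lambda>b. b + 1"]) auto
  also have "\<dots> = (\<Prod>k<t. int (4 * (k + 1) + 1) * int (4 * (2 * t - k) + 1))"
    by (rule prod.reflect_halves)
  also have "[\<dots> = (\<Prod>k<t. - 1 * int (4 * k + 5) ^ 2)] (mod int p)"
  proof (intro cong_prod)
    fix k assume "k \<in> {..<t}"
    then have "int (4 * (2 * t - k) + 1) - - int (4 * k + 5) = 2 * int p"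
      using n p_eq by simp
    then have "[int (4 * (2 * t - k) + 1) = - int (4 * k + 5)] (mod int p)"
      unfolding cong_iff_dvd_diff by simp
    then have "[int (4 * k + 5) * int (4 * (2 * t - k) + 1) = int (4 * k + 5) * - int (4 * k + 5)] (mod int p)"
      by (rule cong_mult[OF cong_refl])
    moreover have "int (4 * (k + 1) + 1) = int (4 * k + 5)"
      and "int (4 * k + 5) * - int (4 * k + 5) = - 1 * int (4 * k + 5) ^ 2"
      by (simp_all add: power2_eq_square algebra_simps)
    ultimately show "[int (4 * (k + 1) + 1) * int (4 * (2 * t - k) + 1) = - 1 * int (4 * k + 5) ^ 2] (mod int p)"
      by (simp only:)
  qed
  also have "(\<Prod>k<t. - 1 * int (4 * k + 5) ^ 2) = (-1) ^ t * (\<Prod>k<t. int (4 * k + 5)) ^ 2"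
    by (simp only: prod.distrib prod_constant card_lessThan prod_power_distrib)
  finally show ?thesis .
qed

lemma double_succ_half_cong: "[2 * int (n + 1) = 1] (mod int p)"
proof -
  have "2 * int (n + 1) - 1 = int p"
    using p_eq by simp
  then show ?thesis
    unfolding cong_iff_dvd_diff by simp
qed

lemma not_dvd_prod_linear:
  assumes n: "n = 2 * t + 1"
  shows "\<not> int p dvd (\<Prod>k<t. int (4 * k + 5))"
proof
  assume "int p dvd (\<Prod>k<t. int (4 * k + 5))"
  then obtain k where "k < t" "int p dvd int (4 * k + 5)"
    using prime_int_p by (auto simp: prime_dvd_prod_iff)
  moreover have "4 * k + 5 < p"
    using \<open>k < t\<close> n p_eq by simp
  ultimately show False
    by (auto dest: zdvd_imp_le)
qed

end

locale neg_nonresidue = odd_prime +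
  fixes d :: int
  assumes Legendre_neg_d: "Legendre (- d) (int p) = -1"
begin

lemma neg_d_power_half_cong: "[(- d) ^ n = -1] (mod int p)"
  using cong_sym[OF Euler_criterion_half[of "- d"]] Legendre_neg_d by simp

lemma d_power_half_cong: "[d ^ n = - ((-1) ^ n)] (mod int p)"
proof -
  have "d ^ n = (-1) ^ n * (- d) ^ n"
    by (simp flip: power_mult_distrib)
  also have "[\<dots> = (-1) ^ n * -1] (mod int p)"
    by (intro cong_mult cong_refl neg_d_power_half_cong)
  finally show ?thesis
    by simp
qed

lemma not_dvd_d: "\<not> int p dvd d"
proof
  assume "int p dvd d"
  then have "Legendre (- d) (int p) = 0"
    by (simp add: Legendre_def cong_0_iff)
  with Legendre_neg_d show False
    by simp
qed

lemma not_dvd_form: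
  assumes "j < n" "k < n"
  shows "\<not> int p dvd int (j + 1) ^ 2 + d * int (k + 1) ^ 2"
proof
  assume "int p dvd int (j + 1) ^ 2 + d * int (k + 1) ^ 2"
  then have form: "[int (j + 1) ^ 2 = - d * int (k + 1) ^ 2] (mod int p)"
    by (simp add: cong_iff_dvd_diff)
  have "coprime (int (k + 1)) (int p)"
    using prime_imp_coprime[OF prime_int_p not_dvd_succ[of k]] assms by (simp add: coprime_commute)
  then obtain u where u: "[int (k + 1) * u = 1] (mod int p)"
    using cong_solve_coprime_int by blast
  have "(int (j + 1) * u) ^ 2 = int (j + 1) ^ 2 * u ^ 2"
    by (simp add: power_mult_distrib)
  also have "[\<dots> = - d * int (k + 1) ^ 2 * u ^ 2] (mod int p)"
    using form by (rule cong_mult[OF _ cong_refl])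
  also have "- d * int (k + 1) ^ 2 * u ^ 2 = - d * (int (k + 1) * u) ^ 2"
    by (simp add: power_mult_distrib)
  also have "[\<dots> = - d * 1 ^ 2] (mod int p)"
    by (intro cong_mult cong_refl cong_pow u)
  finally have "QuadRes (int p) (- d)"
    unfolding QuadRes_def by auto
  with Legendre_neg_d show False
    by (simp add: Legendre_def split: if_splits)
qed

lemma Dinv_rat_cong:
  assumes "1 \<le> e" "e \<le> p - 1"
  defines "D \<equiv> \<lambda>j k. int (j + 1) ^ 2 + d * int (k + 1) ^ 2"
  shows "rat_cong (Dinv e d p) (of_int (S (p - 1 - e) d p)) (int p)"
proof -
  have "of_int (S (p - 1 - e) d p) = det (mat n n (\<lambda>(j, k). (of_int (D j k ^ (p - 1 - e)) :: rat)))"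
    unfolding S_def half_eq D_def of_int_hom.hom_det[symmetric]
    by (intro arg_cong[of _ _ det]) auto
  then show ?thesis
    unfolding Dinv_def half_eq
  proof (simp only:, intro det_rat_cong[OF prime_int_p])
    fix i j assume ij: "i < n" "j < n"
    show "rat_cong (mat n n (\<lambda>(j, k). 1 / of_int (int (j + 1) ^ 2 + d * int (k + 1) ^ 2) ^ e) $$ (i, j))
        (mat n n (\<lambda>(j, k). of_int (D j k ^ (p - 1 - e))) $$ (i, j)) (int p)"
      using inverse_power_rat_cong[OF prime_p not_dvd_form[OF ij] assms(2)] ij by (simp add: D_def)
    show "p_integral (int p) (mat n n (\<lambda>(j, k). of_int (D j k ^ (p - 1 - e))) $$ (i, j))"
      using p_integral_of_int[OF prime_int_p, of "D i j ^ (p - 1 - e)"] ij by simp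
  qed auto
qed

lemma column_factor_minus_2_cong:
  assumes b: "b < n"
  shows "[column_factor n d (p - 2) b = (-1) ^ (b + n) * int n * d ^ (n - 1 - b)] (mod int p)"
proof -
  define k where "k = n - 1 - b"
  have m: "p - 2 - b = n + k" "p - 2 - b - n = k" "b + n \<le> p - 2"
    using b p_eq by (auto simp: k_def)
  have "column_factor n d (p - 2) b
      = int ((p - 2) choose b) * (d ^ n * d ^ k) + int ((p - 2) choose (b + n)) * d ^ k"
    unfolding column_factor_def m by (simp add: power_add)
  also have "[\<dots> = ((-1) ^ b * int (b + 1)) * (- ((-1) ^ n) * d ^ k)
      + ((-1) ^ (b + n) * int (b + n + 1)) * d ^ k] (mod int p)"
    using m by (intro cong_add cong_mult cong_refl d_power_half_cong
        binomial_prime_minus_2_cong[OF prime_p]) simp_all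
  also have "((-1) ^ b * int (b + 1)) * (- ((-1) ^ n) * d ^ k) + ((-1) ^ (b + n) * int (b + n + 1)) * d ^ k
      = (-1) ^ (b + n) * int n * d ^ k"
    by (simp add: power_add algebra_simps)
  finally show ?thesis
    unfolding k_def .
qed

lemma prod_column_factor_minus_2_cong:
  "[(\<Prod>b<n. int n * column_factor n d (p - 2) b) = (-1) ^ n * (- d) ^ (\<Sum>b<n. b)] (mod int p)"
proof -
  define c where "c = int n ^ 2 * (-1) ^ n"
  have "[(\<Prod>b<n. int n * column_factor n d (p - 2) b)
      = (\<Prod>b<n. c * ((-1) ^ b * (1 * d ^ (n - 1 - b))))] (mod int p)"
  proof (intro cong_prod)
    fix b assume "b \<in> {..<n}"
    then have "[int n * column_factor n d (p - 2) b = int n * ((-1) ^ (b + n) * int n * d ^ (n - 1 - b))] (mod int p)"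
      by (intro cong_mult cong_refl column_factor_minus_2_cong) simp
    moreover have "int n * ((-1) ^ (b + n) * int n * d ^ (n - 1 - b)) = c * ((-1) ^ b * (1 * d ^ (n - 1 - b)))"
      by (simp only: c_def power_add power2_eq_square mult_1 mult_ac)
    ultimately show "[int n * column_factor n d (p - 2) b = c * ((-1) ^ b * (1 * d ^ (n - 1 - b)))] (mod int p)"
      by (simp only:)
  qed
  also have "(\<Prod>b<n. c * ((-1) ^ b * (1 * d ^ (n - 1 - b)))) = c ^ n * (-1) ^ (\<Sum>b<n. b) * d ^ (\<Sum>b<n. b)"
    using prod_alternating_reversed_powers[where f = "\<lambda>_. 1" and c = c and d = d and N = n] by simp
  also have "c ^ n = int n ^ (2 * n) * (-1) ^ n"
  proof -
    have "((-1 :: int) ^ n) ^ n = (-1) ^ n"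
      by (cases "even n") simp_all
    then show ?thesis
      by (simp only: c_def power_mult_distrib power_mult)
  qed
  also have "int n ^ (2 * n) * (-1) ^ n * (-1) ^ (\<Sum>b<n. b) * d ^ (\<Sum>b<n. b)
      = int n ^ (2 * n) * ((-1) ^ n * (- d) ^ (\<Sum>b<n. b))"
    by (simp add: power_minus[of d] mult_ac)
  also have "[\<dots> = 1 * ((-1) ^ n * (- d) ^ (\<Sum>b<n. b))] (mod int p)"
    by (rule cong_mult[OF half_power_cong cong_refl])
  finally show ?thesis
    by simp
qed

lemma S_minus_2_cong: "[S (p - 2) d p = - ((- d) ^ (\<Sum>b<n. b))] (mod int p)"
proof -
  define M where "M = S (p - 2) d p"
  have "[M * (-1) ^ (n + 1) = M * (\<Prod>k<n. int (k + 1)) ^ 2] (mod int p)"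
    by (intro cong_mult cong_refl cong_sym[OF prod_half_squared_cong])
  also have "M * (\<Prod>k<n. int (k + 1)) ^ 2 = M * (\<Prod>k<n. (int (k + 1) ^ 2) ^ 1)"
    by (simp add: prod_power_distrib)
  also have "[\<dots> = (\<Prod>b<n. int n * column_factor n d (p - 2) b)] (mod int p)"
    unfolding M_def S_eq_det using p_eq half_pos by (intro power_form_det_cong) auto
  also have "[(\<Prod>b<n. int n * column_factor n d (p - 2) b) = (-1) ^ n * (- d) ^ (\<Sum>b<n. b)] (mod int p)"
    by (rule prod_column_factor_minus_2_cong)
  finally have "[M * (-1) ^ (n + 1) * (-1) ^ (n + 1) = (-1) ^ n * (- d) ^ (\<Sum>b<n. b) * (-1) ^ (n + 1)] (mod int p)"
    by (rule cong_mult[OF _ cong_refl])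
  then show ?thesis
    unfolding M_def by (cases "even n") (simp_all add: minus_one_power_iff)
qed

lemma Legendre_S_minus_2: "Legendre (S (p - 2) d p) (int p) = Legendre 2 (int p)"
proof -
  define K where "K = (\<Sum>b<n. b)"
  have "[Legendre (S (p - 2) d p) (int p) = S (p - 2) d p ^ n] (mod int p)"
    by (rule Euler_criterion_half)
  also have "[S (p - 2) d p ^ n = (- ((- d) ^ K)) ^ n] (mod int p)"
    unfolding K_def by (intro cong_pow S_minus_2_cong)
  also have "(- ((- d) ^ K)) ^ n = (-1) ^ n * ((- d) ^ n) ^ K"
    by (simp add: power_minus[of "(- d) ^ K"] power_mult_distrib mult.commute flip: power_mult)
  also have "[\<dots> = (-1) ^ n * (-1) ^ K] (mod int p)"
    by (intro cong_mult cong_refl cong_pow neg_d_power_half_cong)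
  also have "(-1) ^ n * (-1) ^ K = (-1 :: int) ^ ((p\<^sup>2 - 1) div 8)"
  proof -
    have "p\<^sup>2 - 1 = 8 * (n + K)"
      using double_sum_lessThan_add[of n] by (simp add: K_def p_eq power2_eq_square algebra_simps)
    then show ?thesis
      by (simp add: power_add)
  qed
  also have "\<dots> = Legendre 2 (int p)"
    using Legendre_two[OF prime_p] p_eq by simp
  finally show ?thesis
    by (intro Legendre_values_cong_imp_eq) (auto simp: Legendre_def)
qed

lemma Dinv_1_cong_1_mod_4:
  assumes "p mod 4 = 1"
  shows "rat_cong (Dinv 1 d p) (of_int (d ^ ((p - 1) div 4))) (int p)"
proof -
  define K where "K = (\<Sum>b<n. b)"
  have "even n"
    using assms p_eq by presburger
  then obtain t where n: "n = 2 * t"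
    by blast
  have "2 * (K + t) = 2 * (n * t)"
    using double_sum_lessThan_add[of n] n by (simp add: K_def algebra_simps)
  then have K: "K + t = n * t"
    by simp
  have "[S (p - 2) d p * (- d) ^ t = - ((- d) ^ K) * (- d) ^ t] (mod int p)"
    unfolding K_def by (intro cong_mult cong_refl S_minus_2_cong)
  also have "- ((- d) ^ K) * (- d) ^ t = - (((- d) ^ n) ^ t)"
    by (simp flip: power_add power_mult add: K)
  also have "[\<dots> = - ((-1) ^ t)] (mod int p)"
    by (intro cong_minus_minus_iff[THEN iffD2] cong_pow neg_d_power_half_cong)
  also have "- ((-1) ^ t) = (-1) ^ t * (- ((-1 :: int) ^ n))"
    using \<open>even n\<close> by simp
  also have "[\<dots> = (-1) ^ t * d ^ n] (mod int p)"
    by (intro cong_mult cong_refl cong_sym[OF d_power_half_cong])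
  also have "(-1) ^ t * d ^ n = d ^ t * (- d) ^ t"
    by (simp add: n power_minus[of d t] mult_2 power_add)
  finally have "[S (p - 2) d p * (- d) ^ t = d ^ t * (- d) ^ t] (mod int p)" .
  moreover have "coprime ((- d) ^ t) (int p)"
    using prime_imp_coprime[OF prime_int_p not_dvd_d] by (simp add: coprime_commute)
  ultimately have "[S (p - 2) d p = d ^ t] (mod int p)"
    by (simp add: cong_mult_rcancel)
  then have "rat_cong (of_int (S (p - 2) d p)) (of_int (d ^ t)) (int p)"
    by (simp only: rat_cong_of_int_iff[OF prime_int_p])
  moreover have "rat_cong (Dinv 1 d p) (of_int (S (p - 2) d p)) (int p)"
    using Dinv_rat_cong[of 1] p_gt_2 by (simp add: numeral_2_eq_2)
  moreover have "(p - 1) div 4 = t"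
    using p_eq n by simp
  ultimately show ?thesis
    using rat_cong_trans[OF prime_int_p] by metis
qed

lemma Dinv_1_cong_3_mod_4:
  assumes "p mod 4 = 3"
  shows "rat_cong (Dinv 1 d p) ((-1) ^ ((p + 1) div 4)) (int p)"
proof -
  define K where "K = (\<Sum>b<n. b)"
  have "odd n"
    using assms p_eq by presburger
  then obtain t where n: "n = 2 * t + 1"
    by (blast elim: oddE)
  have "2 * K = 2 * (n * t)"
    using double_sum_lessThan_add[of n] n by (simp add: K_def algebra_simps)
  then have K: "K = n * t"
    by simp
  have "[S (p - 2) d p = - ((- d) ^ K)] (mod int p)"
    unfolding K_def by (rule S_minus_2_cong)
  also have "- ((- d) ^ K) = - (((- d) ^ n) ^ t)"
    by (simp add: K power_mult)
  also have "[\<dots> = - ((-1) ^ t)] (mod int p)"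
    by (intro cong_minus_minus_iff[THEN iffD2] cong_pow neg_d_power_half_cong)
  finally have "rat_cong (of_int (S (p - 2) d p)) (of_int (- ((-1) ^ t))) (int p)"
    by (simp only: rat_cong_of_int_iff[OF prime_int_p])
  moreover have "rat_cong (Dinv 1 d p) (of_int (S (p - 2) d p)) (int p)"
    using Dinv_rat_cong[of 1] p_gt_2 by (simp add: numeral_2_eq_2)
  moreover have "(of_int (- ((-1) ^ t)) :: rat) = (-1) ^ ((p + 1) div 4)"
    using p_eq n by simp
  ultimately show ?thesis
    using rat_cong_trans[OF prime_int_p] by metis
qed

lemma column_factor_minus_3_cong:
  assumes b: "b + 2 \<le> n"
  shows "[2 * column_factor n d (p - 3) b = (-1) ^ (b + n) * int n * int (2 * b + n + 3) * d ^ (n - 2 - b)] (mod int p)"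
proof -
  define k where "k = n - 2 - b"
  have m: "p - 3 - b = n + k" "p - 3 - b - n = k" "b + n \<le> p - 3"
    using b p_eq by (auto simp: k_def)
  have "2 * column_factor n d (p - 3) b
      = (2 * int ((p - 3) choose b)) * (d ^ n * d ^ k) + (2 * int ((p - 3) choose (b + n))) * d ^ k"
    unfolding column_factor_def m by (simp add: power_add algebra_simps)
  also have "[\<dots> = ((-1) ^ b * int ((b + 1) * (b + 2))) * (- ((-1) ^ n) * d ^ k)
      + ((-1) ^ (b + n) * int ((b + n + 1) * (b + n + 2))) * d ^ k] (mod int p)"
    using m by (intro cong_add cong_mult cong_refl d_power_half_cong
        binomial_prime_minus_3_cong[OF prime_p]) simp_all
  also have "((-1) ^ b * int ((b + 1) * (b + 2))) * (- ((-1) ^ n) * d ^ k)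
      + ((-1) ^ (b + n) * int ((b + n + 1) * (b + n + 2))) * d ^ k
      = (-1) ^ (b + n) * int n * int (2 * b + n + 3) * d ^ k"
    by (simp add: power_add algebra_simps)
  finally show ?thesis
    unfolding k_def .
qed

lemma column_factor_minus_3_last_cong:
  "[2 * column_factor n d (p - 3) (n - 1) = (-1) ^ (n - 1) * int n * int (n + 1) * d ^ (n - 1)] (mod int p)"
proof -
  have m: "p - 3 - (n - 1) = n - 1" "\<not> n - 1 + n \<le> p - 3" "n - 1 \<le> p - 3"
    using p_eq half_pos by auto
  have "2 * column_factor n d (p - 3) (n - 1) = 2 * int ((p - 3) choose (n - 1)) * d ^ (n - 1)"
    unfolding column_factor_def using m by simp
  also have "[\<dots> = (-1) ^ (n - 1) * int ((n - 1 + 1) * (n - 1 + 2)) * d ^ (n - 1)] (mod int p)"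
    using m by (intro cong_mult cong_refl binomial_prime_minus_3_cong[OF prime_p])
  also have "int ((n - 1 + 1) * (n - 1 + 2)) = int n * int (n + 1)"
    using half_pos by (simp add: algebra_simps)
  finally show ?thesis
    by (simp only: mult.assoc)
qed

lemma S_minus_3_cong: "[S (p - 3) d p = (\<Prod>b<n. int n * column_factor n d (p - 3) b)] (mod int p)"
proof -
  have "(\<Prod>k<n. (int (k + 1) ^ 2) ^ 2) = ((\<Prod>k<n. int (k + 1)) ^ 2) ^ 2"
    by (simp only: prod_power_distrib)
  also have "[\<dots> = ((-1) ^ (n + 1)) ^ 2] (mod int p)"
    by (intro cong_pow prod_half_squared_cong)
  also have "((-1 :: int) ^ (n + 1)) ^ 2 = 1"
    by (simp add: minus_one_power_iff)
  finally have "[S (p - 3) d p * 1 = S (p - 3) d p * (\<Prod>k<n. (int (k + 1) ^ 2) ^ 2)] (mod int p)"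
    by (rule cong_mult[OF cong_refl cong_sym])
  also have "[S (p - 3) d p * (\<Prod>k<n. (int (k + 1) ^ 2) ^ 2) = (\<Prod>b<n. int n * column_factor n d (p - 3) b)] (mod int p)"
    unfolding S_eq_det using p_eq half_pos by (intro power_form_det_cong) auto
  finally show ?thesis
    by simp
qed

lemma S_minus_3_dvd:
  assumes "p mod 4 = 1"
  shows "int p dvd S (p - 3) d p"
proof -
  have "even n"
    using assms p_eq by presburger
  then obtain t where n: "n = 2 * t"
    by blast
  then have b: "t - 1 + 2 \<le> n" and t: "2 * (t - 1) + n + 3 = p"
    using half_pos p_eq by auto
  from b have "[2 * column_factor n d (p - 3) (t - 1)
      = (-1) ^ (t - 1 + n) * int n * int (2 * (t - 1) + n + 3) * d ^ (n - 2 - (t - 1))] (mod int p)"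
    by (rule column_factor_minus_3_cong)
  then have "[2 * column_factor n d (p - 3) (t - 1)
      = (-1) ^ (t - 1 + n) * int n * int p * d ^ (n - 2 - (t - 1))] (mod int p)"
    unfolding t .
  moreover have "int p dvd (-1) ^ (t - 1 + n) * int n * int p * d ^ (n - 2 - (t - 1))"
    by (rule dvd_mult2[OF dvd_triv_right])
  ultimately have "int p dvd 2 * column_factor n d (p - 3) (t - 1)"
    using cong_dvd_iff by blast
  then have "int p dvd column_factor n d (p - 3) (t - 1)"
    using prime_int_p p_gt_2 by (auto simp: cong_0_iff prime_dvd_mult_iff dest: zdvd_imp_le)
  then have "int p dvd int n * column_factor n d (p - 3) (t - 1)"
    by (rule dvd_mult)
  also have "int n * column_factor n d (p - 3) (t - 1) dvd (\<Prod>b<n. int n * column_factor n d (p - 3) b)"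
    using b by (intro dvd_prodI) auto
  finally have "int p dvd (\<Prod>b<n. int n * column_factor n d (p - 3) b)" .
  then show ?thesis
    using S_minus_3_cong cong_dvd_iff by blast
qed

lemma prod_column_factor_minus_3_init_cong:
  assumes n: "n = 2 * t + 1"
  shows "[(\<Prod>b<2 * t. int n * (2 * column_factor n d (p - 3) b))
      = int n ^ (4 * t) * (-1) ^ t * (\<Prod>b<2 * t. int (2 * b + n + 3)) * d ^ (\<Sum>b<2 * t. b)] (mod int p)"
proof -
  define c where "c = - (int n ^ 2)"
  have "[(\<Prod>b<2 * t. int n * (2 * column_factor n d (p - 3) b))
      = (\<Prod>b<2 * t. c * ((-1) ^ b * (int (2 * b + n + 3) * d ^ (2 * t - 1 - b))))] (mod int p)"
  proof (intro cong_prod)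
    fix b assume "b \<in> {..<2 * t}"
    then have "[int n * (2 * column_factor n d (p - 3) b)
        = int n * ((-1) ^ (b + n) * int n * int (2 * b + n + 3) * d ^ (n - 2 - b))] (mod int p)"
      using n by (intro cong_mult cong_refl column_factor_minus_3_cong) simp
    moreover have "(-1 :: int) ^ (b + n) = - ((-1) ^ b)" and "n - 2 - b = 2 * t - 1 - b"
      using n by (simp_all add: power_add)
    ultimately show "[int n * (2 * column_factor n d (p - 3) b)
        = c * ((-1) ^ b * (int (2 * b + n + 3) * d ^ (2 * t - 1 - b)))] (mod int p)"
      by (simp add: c_def power2_eq_square algebra_simps)
  qed
  also have "(\<Prod>b<2 * t. c * ((-1) ^ b * (int (2 * b + n + 3) * d ^ (2 * t - 1 - b))))
      = c ^ (2 * t) * (-1) ^ (\<Sum>b<2 * t. b) * (\<Prod>b<2 * t. int (2 * b + n + 3)) * d ^ (\<Sum>b<2 * t. b)"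
    by (rule prod_alternating_reversed_powers)
  also have "c ^ (2 * t) = int n ^ (4 * t)"
    by (simp add: c_def power_mult[symmetric])
  also have "(-1 :: int) ^ (\<Sum>b<2 * t. b) = (-1) ^ t"
  proof -
    have "even ((\<Sum>b<2 * t. b) + t)"
      unfolding sum_lessThan_double_add by simp
    then show ?thesis
      by (simp add: minus_one_power_iff)
  qed
  finally show ?thesis .
qed

lemma prod_column_factor_minus_3_cong:
  assumes n: "n = 2 * t + 1"
  shows "[(\<Prod>b<n. int n * (2 * column_factor n d (p - 3) b))
      = (-1) ^ t * (\<Prod>b<2 * t. int (2 * b + n + 3)) * int (n + 1)] (mod int p)"
proof -
  define K where "K = (\<Sum>b<2 * t. b)"
  define P where "P = (\<Prod>b<2 * t. int (2 * b + n + 3))"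
  have "n - 1 = 2 * t"
    using n by simp
  then have "[2 * column_factor n d (p - 3) (2 * t) = int n * int (n + 1) * d ^ (2 * t)] (mod int p)"
    using column_factor_minus_3_last_cong by simp
  then have "[(\<Prod>b<2 * t. int n * (2 * column_factor n d (p - 3) b)) * (int n * (2 * column_factor n d (p - 3) (2 * t)))
      = (int n ^ (4 * t) * (-1) ^ t * P * d ^ K) * (int n * (int n * int (n + 1) * d ^ (2 * t)))] (mod int p)"
    unfolding K_def P_def by (intro cong_mult[OF prod_column_factor_minus_3_init_cong[OF n]] cong_mult[OF cong_refl])
  moreover have "(\<Prod>b<n. int n * (2 * column_factor n d (p - 3) b))
      = (\<Prod>b<2 * t. int n * (2 * column_factor n d (p - 3) b)) * (int n * (2 * column_factor n d (p - 3) (2 * t)))"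
    using n by simp
  moreover have "(int n ^ (4 * t) * (-1) ^ t * P * d ^ K) * (int n * (int n * int (n + 1) * d ^ (2 * t)))
      = int n ^ (2 * n) * (-1) ^ t * P * int (n + 1) * (d ^ n) ^ t"
  proof -
    have "K + 2 * t = n * t"
      using sum_lessThan_double_add[of t] n unfolding K_def by (simp add: algebra_simps)
    then have powers_d: "d ^ K * d ^ (2 * t) = (d ^ n) ^ t"
      by (simp flip: power_add power_mult)
    have powers_n: "int n ^ (4 * t) * (int n * int n) = int n ^ (2 * n)"
      using n by (simp add: power_add algebra_simps flip: power_mult)
    have "(int n ^ (4 * t) * (-1) ^ t * P * d ^ K) * (int n * (int n * int (n + 1) * d ^ (2 * t)))
        = (int n ^ (4 * t) * (int n * int n)) * (-1) ^ t * P * int (n + 1) * (d ^ K * d ^ (2 * t))"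
      by (simp only: mult_ac)
    then show ?thesis
      by (simp only: powers_n powers_d)
  qed
  moreover have "[int n ^ (2 * n) * (-1) ^ t * P * int (n + 1) * (d ^ n) ^ t = 1 * (-1) ^ t * P * int (n + 1) * 1] (mod int p)"
  proof (intro cong_mult cong_refl half_power_cong)
    have "[d ^ n = - ((-1) ^ n)] (mod int p)"
      by (rule d_power_half_cong)
    then show "[(d ^ n) ^ t = 1] (mod int p)"
      using n cong_pow[of "d ^ n" 1 "int p" t] by simp
  qed
  ultimately show ?thesis
    unfolding P_def by (metis (no_types, lifting) cong_trans mult_1 mult_1_right)
qed

lemma S_minus_3_cong_3_mod_4:
  assumes n: "n = 2 * t + 1"
  shows "[4 ^ n * S (p - 3) d p = (\<Prod>k<t. int (4 * k + 5)) ^ 2] (mod int p)"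
proof -
  define P where "P = (\<Prod>b<2 * t. int (2 * b + n + 3))"
  have "4 ^ n * S (p - 3) d p = 2 ^ n * (2 ^ n * S (p - 3) d p)"
    by (simp add: power_mult_distrib[symmetric])
  also have "[\<dots> = 2 ^ n * (2 ^ n * (\<Prod>b<n. int n * column_factor n d (p - 3) b))] (mod int p)"
    by (intro cong_mult cong_refl S_minus_3_cong)
  also have "2 ^ n * (\<Prod>b<n. int n * column_factor n d (p - 3) b) = (\<Prod>b<n. int n * (2 * column_factor n d (p - 3) b))"
    by (simp add: prod.distrib algebra_simps)
  also have "[2 ^ n * \<dots> = 2 ^ n * ((-1) ^ t * P * int (n + 1))] (mod int p)"
    unfolding P_def by (intro cong_mult cong_refl prod_column_factor_minus_3_cong n)
  also have "2 ^ n * ((-1) ^ t * P * int (n + 1)) = (-1) ^ t * (2 ^ (2 * t) * P) * (2 * int (n + 1))"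
    by (simp add: n algebra_simps)
  also have "[\<dots> = (-1) ^ t * ((-1) ^ t * (\<Prod>k<t. int (4 * k + 5)) ^ 2) * 1] (mod int p)"
  proof -
    have "2 ^ (2 * t) * P = (\<Prod>b<2 * t. 2 * int (2 * b + n + 3))"
      by (simp only: P_def prod.distrib prod_constant card_lessThan)
    also have "\<dots> = (\<Prod>b<2 * t. int (4 * b + 5) + int p)"
      by (intro prod.cong) (simp_all add: p_eq)
    also have "[\<dots> = (\<Prod>b<2 * t. int (4 * b + 5))] (mod int p)"
      by (intro cong_prod) (simp add: cong_def)
    also have "[(\<Prod>b<2 * t. int (4 * b + 5)) = (-1) ^ t * (\<Prod>k<t. int (4 * k + 5)) ^ 2] (mod int p)"
      by (rule prod_linear_reflect_cong[OF n])
    finally have "[2 ^ (2 * t) * P = (-1) ^ t * (\<Prod>k<t. int (4 * k + 5)) ^ 2] (mod int p)" .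
    then show ?thesis
      by (rule cong_mult[OF cong_mult[OF cong_refl] double_succ_half_cong])
  qed
  also have "(-1) ^ t * ((-1) ^ t * (\<Prod>k<t. int (4 * k + 5)) ^ 2) * 1 = (\<Prod>k<t. int (4 * k + 5)) ^ 2"
    by (simp add: minus_one_power_iff)
  finally show ?thesis .
qed

lemma Legendre_S_minus_3: "Legendre (S (p - 3) d p) (int p) = (1 - Legendre (-1) (int p)) div 2"
proof (cases "even n")
  case True
  then have "p mod 4 = 1"
    using p_eq by presburger
  then have "Legendre (S (p - 3) d p) (int p) = 0"
    using S_minus_3_dvd by (simp add: Legendre_def cong_0_iff)
  with True show ?thesis
    by (simp add: Legendre_minus_one)
next
  case False
  then obtain t where n: "n = 2 * t + 1"
    by (blast elim: oddE)
  define Y where "Y = (\<Prod>k<t. int (4 * k + 5))"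
  define x where "x = int (n + 1)"
  have "(Y * x ^ n) ^ 2 = Y ^ 2 * (x ^ 2) ^ n"
    by (simp add: power_mult_distrib mult.commute flip: power_mult)
  also have "[\<dots> = 4 ^ n * S (p - 3) d p * (x ^ 2) ^ n] (mod int p)"
    unfolding Y_def by (intro cong_mult[OF _ cong_refl] cong_sym[OF S_minus_3_cong_3_mod_4[OF n]])
  also have "4 ^ n * S (p - 3) d p * (x ^ 2) ^ n = S (p - 3) d p * ((2 * x) ^ 2) ^ n"
    by (simp add: power_mult_distrib)
  also have "[\<dots> = S (p - 3) d p * (1 ^ 2) ^ n] (mod int p)"
    unfolding x_def by (intro cong_mult cong_refl cong_pow double_succ_half_cong)
  finally have "QuadRes (int p) (S (p - 3) d p)"
    unfolding QuadRes_def by auto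
  moreover have "\<not> [S (p - 3) d p = 0] (mod int p)"
  proof
    assume "[S (p - 3) d p = 0] (mod int p)"
    then have "[4 ^ n * S (p - 3) d p = 0] (mod int p)"
      using cong_mult[OF cong_refl[of "4 ^ n"]] by fastforce
    then have "int p dvd Y ^ 2"
      using S_minus_3_cong_3_mod_4[OF n] unfolding Y_def by (metis cong_dvd_iff cong_0_iff)
    then show False
      using not_dvd_prod_linear[OF n] prime_int_p prime_dvd_power unfolding Y_def by blast
  qed
  ultimately have "Legendre (S (p - 3) d p) (int p) = 1"
    by (simp add: Legendre_def)
  moreover have "Legendre (-1) (int p) = -1"
    using False by (simp add: Legendre_minus_one)
  ultimately show ?thesis
    by simp
qed

lemma Dinv_2_cong_3_mod_4:
  assumes "p mod 4 = 3"
  shows "rat_cong (Dinv 2 d p) (1/4 * (\<Prod>r = 1..(p - 3) div 4. (of_nat r + 1/4) ^ 2)) (int p)"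
proof -
  have "odd n"
    using assms p_eq by presburger
  then obtain t where n: "n = 2 * t + 1"
    by (blast elim: oddE)
  define Y where "Y = (\<Prod>k<t. int (4 * k + 5))"
  have "rat_cong (Dinv 2 d p) (of_int (S (p - 3) d p)) (int p)"
    using Dinv_rat_cong[of 2] p_gt_2 by (simp add: numeral_3_eq_3)
  moreover have "rat_cong (of_int (S (p - 3) d p)) (of_int (Y ^ 2) / of_int (4 ^ n)) (int p)"
  proof (rule rat_cong_of_int_divide[OF prime_int_p])
    show "\<not> int p dvd 4 ^ n"
    proof
      assume "int p dvd 4 ^ n"
      then have "int p dvd 4"
        using prime_dvd_power[OF prime_int_p] by blast
      then have "int p dvd 2 ^ 2"
        by simp
      then have "int p dvd 2"
        using prime_dvd_power[OF prime_int_p] by blast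
      with p_gt_2 show False
        by (auto dest: zdvd_imp_le)
    qed
    show "[4 ^ n * S (p - 3) d p = Y ^ 2] (mod int p)"
      unfolding Y_def by (rule S_minus_3_cong_3_mod_4[OF n])
  qed
  moreover have "(p - 3) div 4 = t"
    using p_eq n by simp
  then have "of_int (Y ^ 2) / of_int (4 ^ n) = 1/4 * (\<Prod>r = 1..(p - 3) div 4. (of_nat r + 1/4 :: rat) ^ 2)"
    unfolding Y_def n prod_shifted_quarter_squares by simp
  ultimately show ?thesis
    using rat_cong_trans[OF prime_int_p] by metis
qed

end

theorem theorem1p2:
  fixes p :: nat and d :: int
  assumes "prime p" and "odd p" and "Legendre (- d) (int p) = -1"
  shows "(Legendre (S (p - 2) d p) (int p) = Legendre 2 (int p))
    \<and> (p mod 4 = 1 \<longrightarrow> rat_cong (Dinv 1 d p) (of_int (d ^ ((p - 1) div 4))) (int p))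
    \<and> (p mod 4 = 3 \<longrightarrow> rat_cong (Dinv 1 d p) ((-1) ^ ((p + 1) div 4)) (int p))
    \<and> (Legendre (S (p - 3) d p) (int p) = (1 - Legendre (-1) (int p)) div 2)
    \<and> (p mod 4 = 3 \<longrightarrow> rat_cong (Dinv 2 d p)
           (1/4 * (\<Prod>r = 1..(p - 3) div 4. (of_nat r + 1/4) ^ 2)) (int p))"
proof -
  have "p = 2 * ((p - 1) div 2) + 1"
    using \<open>odd p\<close> by presburger
  then interpret neg_nonresidue p "(p - 1) div 2" d
    using assms by (intro neg_nonresidue.intro odd_prime.intro neg_nonresidue_axioms.intro)
  show ?thesis
    using Legendre_S_minus_2 Dinv_1_cong_1_mod_4 Dinv_1_cong_3_mod_4 Legendre_S_minus_3
      Dinv_2_cong_3_mod_4 by blast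
qed

end
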